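(* Let $n \ge 2$ be even and $N\ge 1$ an integer. Let $\tau \in S_{N+3n-3}$ have size at most $N$. Then every permutation in $S_{N+3n-3}$ with the same cycle type as $\tau$ can be obtained from $\tau$ by successive conjugation by $n$-crossing permutations over $S_{N+3n-3}$; that is, it equals $g\tau g^{-1}$ for some $g$ that is a product of $n$-crossing permutations over $S_{N+3n-3}$.
   Context: For integers $2\le n\le m$ and $1 \le j \le m-n+1$, the $n$-crossing permutation $\pi_j\in S_m$ is $\pi_j=(j,\,j+n-1)(j+1,\,j+n-2)\cdots$, i.e. the involution sending $i \mapsto 2j+n-1-i$ for $j\le i\le j+n-1$ and fixing all other elements of $\{1,\dots,m\}$. The $n$-crossing permutations over $S_m$ are $\pi_1,\dots,\pi_{m-n+1}$. The size of a permutation is the number of points it does not fix (the number of distinct entries in its cycle notation after dropping $1$-cycles). *)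

theory Defs
  imports "HOL-Combinatorics.Permutations" "HOL-Library.Multiset"
begin

text \<open>The n-crossing permutation pi_j over S_m (m is implicit: points outside
  {j..j+n-1} are fixed). Valid crossings over S_m are those with 1 <= j <= m-n+1.\<close>
definition crossing :: "nat \<Rightarrow> nat \<Rightarrow> nat \<Rightarrow> nat" where
  "crossing n j = (\<lambda>i. if j \<le> i \<and> i \<le> j + n - 1 then 2 * j + n - 1 - i else i)"

inductive crossing_product :: "nat \<Rightarrow> nat \<Rightarrow> (nat \<Rightarrow> nat) \<Rightarrow> bool" for n m where
  cp_id: "crossing_product n m id"
| cp_step: "\<lbrakk>1 \<le> j; j + n - 1 \<le> m; crossing_product n m g\<rbrakk>
             \<Longrightarrow> crossing_product n m (crossing n j \<circ> g)"

definition perm_size :: "(nat \<Rightarrow> nat) \<Rightarrow> nat" where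
  "perm_size p = card {i. p i \<noteq> i}"

definition cycle_type :: "nat \<Rightarrow> (nat \<Rightarrow> nat) \<Rightarrow> nat multiset" where
  "cycle_type m p = image_mset card (mset_set {{(p ^^ k) x | k. True} | x. x \<in> {1..m}})"

end

(* The products of n-crossings form a group of permutations of {1..m}. For n = 2 the crossings
   are the adjacent transpositions, so this group is the whole symmetric group. For n >= 4 the
   product pi_j pi_(j+1) pi_(j+2) pi_(j+1) is the 3-cycle (j, j+n-1, j+n+1); conjugating it by
   crossings gives the 3-cycles (b, b+2, b+4). Two 3-cycles sharing two points generate all
   3-cycles on their four points, and a 3-cycle through a new point extends "all 3-cycles on Y"
   to Y plus that point. The cycles (b, b+2, b+4) thus reach all odd points, and then, n being
   even, the cycles (j, j+n-1, j+n+1) attach the even points one by one. So the group contains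
   every 3-cycle of {1..m} and hence the alternating group.
   Equal cycle types give sigma = h tau h^-1 for some permutation h of {1..m}. Since tau moves at
   most N < m - 1 points, it fixes two points a, b, and replacing h by h (a b) if necessary makes
   h even without changing h tau h^-1. *)

theory Submission
  imports Defs "HOL-Algebra.Sym_Groups" "HOL-Combinatorics.Orbits"
begin

unbundle no m_inv_syntax

definition perm_orbits :: "('a \<Rightarrow> 'a) \<Rightarrow> 'a set \<Rightarrow> 'a set set" where
  "perm_orbits p A = orbit p ` A"

lemma cycle_type_conv_perm_orbits:
  assumes "p permutes {1..m}"
  shows "cycle_type m p = image_mset card (mset_set (perm_orbits p {1..m}))"
proof -
  have "permutation p" using assms by (auto simp: permutation_permutes)
  then show ?thesis
    unfolding cycle_type_def perm_orbits_def orbit_altdef_permutation[OF \<open>permutation p\<close>]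
    by (simp only: setcompr_eq_image Collect_mem_eq)
qed

lemma card_orbit_eq_funpow_dist1:
  assumes "x \<in> orbit p x"
  shows "card (orbit p x) = funpow_dist1 p x x"
  using card_image[OF inj_on_funpow_dist1[OF assms]] orbit_conv_funpow_dist1[OF assms] by simp

lemma funpow_eq_iff_mod_card_orbit:
  assumes "permutation p"
  shows "(p ^^ i) x = (p ^^ j) x \<longleftrightarrow> i mod card (orbit p x) = j mod card (orbit p x)"
proof -
  have self: "x \<in> orbit p x" by (rule permutation_self_in_orbit[OF assms])
  define k where "k = funpow_dist1 p x x"
  have inj: "inj_on (\<lambda>i. (p ^^ i) x) {0..<k}"
    unfolding k_def by (rule inj_on_funpow_dist1[OF self])
  have "(p ^^ i) x = (p ^^ j) x \<longleftrightarrow> (p ^^ (i mod k)) x = (p ^^ (j mod k)) x"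
    using funpow_mod_eq[OF funpow_dist1_prop[OF self]] by (simp add: k_def)
  also have "\<dots> \<longleftrightarrow> i mod k = j mod k"
    using inj_onD[OF inj] by (auto simp: k_def)
  finally show ?thesis by (simp add: card_orbit_eq_funpow_dist1[OF self] k_def)
qed

lemma orbit_conjugator_exists:
  assumes \<sigma>: "permutation \<sigma>" and \<tau>: "permutation \<tau>"
    and card_eq: "card (orbit \<sigma> x) = card (orbit \<tau> y)"
  shows "\<exists>h. bij_betw h (orbit \<tau> y) (orbit \<sigma> x) \<and> (\<forall>z\<in>orbit \<tau> y. h (\<tau> z) = \<sigma> (h z))"
proof -
  define h where "h z = (\<sigma> ^^ funpow_dist \<tau> y z) x" for z
  have x_in: "x \<in> orbit \<sigma> x" and y_in: "y \<in> orbit \<tau> y"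
    using \<sigma> \<tau> by (simp_all add: permutation_self_in_orbit)
  have h_funpow: "h ((\<tau> ^^ i) y) = (\<sigma> ^^ i) x" for i
  proof -
    define d where "d = funpow_dist \<tau> y ((\<tau> ^^ i) y)"
    have "(\<tau> ^^ d) y = (\<tau> ^^ i) y"
      unfolding d_def by (rule funpow_dist_prop[OF funpow_in_orbit[OF y_in]])
    then have "(\<sigma> ^^ d) x = (\<sigma> ^^ i) x"
      using funpow_eq_iff_mod_card_orbit[OF \<tau>] funpow_eq_iff_mod_card_orbit[OF \<sigma>] card_eq
      by metis
    then show ?thesis by (simp add: h_def d_def)
  qed
  have orbit_\<tau>: "orbit \<tau> y = (\<lambda>i. (\<tau> ^^ i) y) ` {0..<card (orbit \<tau> y)}"
    using orbit_conv_funpow_dist1[OF y_in] card_orbit_eq_funpow_dist1[OF y_in] by simp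
  have image: "h ` orbit \<tau> y = orbit \<sigma> x"
    using orbit_conv_funpow_dist1[OF x_in] card_orbit_eq_funpow_dist1[OF x_in] card_eq
    by (subst orbit_\<tau>) (simp add: image_image h_funpow)
  have "inj_on h (orbit \<tau> y)"
    using card_eq image by (intro eq_card_imp_inj_on finite_orbit[OF y_in]) simp
  moreover have "h (\<tau> z) = \<sigma> (h z)" if "z \<in> orbit \<tau> y" for z
  proof -
    obtain i where "z = (\<tau> ^^ i) y" using \<open>z \<in> orbit \<tau> y\<close> by (auto simp: orbit_altdef)
    then show ?thesis using h_funpow[of "Suc i"] h_funpow[of i] by simp
  qed
  ultimately show ?thesis using image unfolding bij_betw_def by blast
qed

lemma orbit_subset_if_image_subset:
  assumes "f ` A \<subseteq> A" "x \<in> A"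
  shows "orbit f x \<subseteq> A"
proof
  fix y assume "y \<in> orbit f x"
  then show "y \<in> A" by induction (use assms in auto)
qed

lemma permutation_orbit_eq_if_mem:
  assumes "permutation f" "y \<in> orbit f x"
  shows "orbit f y = orbit f x"
  using orbit_cyclic_eq3[OF cyclic_on_orbit'[OF assms(1)] assms(2)] .

lemma permutation_image_diff_orbit_subset:
  assumes "permutation f" "f ` A \<subseteq> A"
  shows "f ` (A - orbit f x) \<subseteq> A - orbit f x"
proof
  fix y assume "y \<in> f ` (A - orbit f x)"
  then obtain z where z: "z \<in> A" "z \<notin> orbit f x" "y = f z" by blast
  have "f z \<notin> orbit f x"
    using z(2) permutation_orbit_eq_if_mem[OF assms(1)] permutation_orbit_step[OF assms(1), of z]
      permutation_self_in_orbit[OF assms(1), of z]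
    by metis
  then show "y \<in> A - orbit f x" using z assms(2) by blast
qed

lemma perm_orbits_diff_orbit:
  assumes "permutation f"
  shows "perm_orbits f (A - orbit f x) = perm_orbits f A - {orbit f x}"
  using permutation_orbit_eq_if_mem[OF assms] permutation_self_in_orbit[OF assms]
  unfolding perm_orbits_def by blast

lemma image_mset_mset_set_remove_match:
  assumes "finite X" "finite Y" "image_mset f (mset_set X) = image_mset g (mset_set Y)" "x \<in> X"
  shows "\<exists>y\<in>Y. g y = f x \<and> image_mset f (mset_set (X - {x})) = image_mset g (mset_set (Y - {y}))"
proof -
  have "f x \<in># image_mset g (mset_set Y)" using assms(1,3,4) by (metis elem_mset_set image_eqI set_image_mset)
  then obtain y where y: "y \<in> Y" "g y = f x" using assms(2) by auto
  have "image_mset f (mset_set (X - {x})) = image_mset g (mset_set (Y - {y}))"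
    using assms y by (simp add: mset_set_Diff image_mset_Diff)
  with y show ?thesis by blast
qed

lemma conjugator_Un:
  assumes "bij_betw h\<^sub>1 B\<^sub>1 A\<^sub>1" "\<forall>z\<in>B\<^sub>1. h\<^sub>1 (\<tau> z) = \<sigma> (h\<^sub>1 z)" "\<tau> ` B\<^sub>1 \<subseteq> B\<^sub>1"
    and "bij_betw h\<^sub>2 B\<^sub>2 A\<^sub>2" "\<forall>z\<in>B\<^sub>2. h\<^sub>2 (\<tau> z) = \<sigma> (h\<^sub>2 z)" "\<tau> ` B\<^sub>2 \<subseteq> B\<^sub>2"
    and "A\<^sub>1 \<inter> A\<^sub>2 = {}" "B\<^sub>1 \<inter> B\<^sub>2 = {}"
  shows "\<exists>h. bij_betw h (B\<^sub>1 \<union> B\<^sub>2) (A\<^sub>1 \<union> A\<^sub>2) \<and> (\<forall>z\<in>B\<^sub>1 \<union> B\<^sub>2. h (\<tau> z) = \<sigma> (h z))"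
proof -
  define h where "h z = (if z \<in> B\<^sub>1 then h\<^sub>1 z else h\<^sub>2 z)" for z
  have "bij_betw h B\<^sub>1 A\<^sub>1"
    using assms(1) by (rule bij_betw_cong[THEN iffD1, rotated]) (simp add: h_def)
  moreover have "bij_betw h B\<^sub>2 A\<^sub>2"
    using assms(4) by (rule bij_betw_cong[THEN iffD1, rotated]) (use assms(8) in \<open>auto simp: h_def\<close>)
  ultimately have "bij_betw h (B\<^sub>1 \<union> B\<^sub>2) (A\<^sub>1 \<union> A\<^sub>2)"
    using assms(7,8) by (intro bij_betw_combine) auto
  moreover have "\<forall>z\<in>B\<^sub>1 \<union> B\<^sub>2. h (\<tau> z) = \<sigma> (h z)"
    using assms(2,3,5,6,8) by (auto simp: h_def)
  ultimately show ?thesis by blast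
qed

lemma conjugator_exists_if_orbit_cards_eq:
  assumes \<sigma>: "permutation \<sigma>" and \<tau>: "permutation \<tau>"
    and "finite A" "finite B" "\<sigma> ` A \<subseteq> A" "\<tau> ` B \<subseteq> B"
    and "image_mset card (mset_set (perm_orbits \<sigma> A)) = image_mset card (mset_set (perm_orbits \<tau> B))"
  shows "\<exists>h. bij_betw h B A \<and> (\<forall>z\<in>B. h (\<tau> z) = \<sigma> (h z))"
  using assms(3-7)
proof (induction "card A" arbitrary: A B rule: less_induct)
  case less
  show ?case
  proof (cases "A = {}")
    case True
    then have "B = {}" using less.prems(2,5) by (simp add: perm_orbits_def mset_set_empty_iff)
    with True show ?thesis by (simp add: bij_betw_def)
  next
    case False
    then obtain x where x: "x \<in> A" by blast
    from image_mset_mset_set_remove_match[of "perm_orbits \<sigma> A" "perm_orbits \<tau> B" card card "orbit \<sigma> x"]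
    obtain y where y: "y \<in> B" "card (orbit \<tau> y) = card (orbit \<sigma> x)"
      and rest: "image_mset card (mset_set (perm_orbits \<sigma> A - {orbit \<sigma> x}))
        = image_mset card (mset_set (perm_orbits \<tau> B - {orbit \<tau> y}))"
      using less.prems x by (auto simp: perm_orbits_def)
    have "x \<in> orbit \<sigma> x" by (rule permutation_self_in_orbit[OF \<sigma>])
    then have "card (A - orbit \<sigma> x) < card A" using x less.prems(1) by (intro psubset_card_mono) auto
    then obtain h\<^sub>2 where h\<^sub>2: "bij_betw h\<^sub>2 (B - orbit \<tau> y) (A - orbit \<sigma> x)"
        "\<forall>z\<in>B - orbit \<tau> y. h\<^sub>2 (\<tau> z) = \<sigma> (h\<^sub>2 z)"
      using less.hyps[of "A - orbit \<sigma> x" "B - orbit \<tau> y"] less.prems rest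
        permutation_image_diff_orbit_subset[OF \<sigma>] permutation_image_diff_orbit_subset[OF \<tau>]
      by (auto simp: perm_orbits_diff_orbit[OF \<sigma>] perm_orbits_diff_orbit[OF \<tau>])
    obtain h\<^sub>1 where h\<^sub>1: "bij_betw h\<^sub>1 (orbit \<tau> y) (orbit \<sigma> x)"
        "\<forall>z\<in>orbit \<tau> y. h\<^sub>1 (\<tau> z) = \<sigma> (h\<^sub>1 z)"
      using orbit_conjugator_exists[OF \<sigma> \<tau>] y(2) by metis
    have "\<tau> ` orbit \<tau> y \<subseteq> orbit \<tau> y" by (auto intro: orbit.intros)
    from conjugator_Un[OF h\<^sub>1 this h\<^sub>2 permutation_image_diff_orbit_subset[OF \<tau> less.prems(4)]
        Diff_disjoint Diff_disjoint]
    obtain h where "bij_betw h (orbit \<tau> y \<union> (B - orbit \<tau> y)) (orbit \<sigma> x \<union> (A - orbit \<sigma> x))"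
        "\<forall>z\<in>orbit \<tau> y \<union> (B - orbit \<tau> y). h (\<tau> z) = \<sigma> (h z)"
      by blast
    moreover have "orbit \<tau> y \<subseteq> B" "orbit \<sigma> x \<subseteq> A"
      using orbit_subset_if_image_subset[OF less.prems(4) y(1)]
        orbit_subset_if_image_subset[OF less.prems(3) x] .
    ultimately show ?thesis by (auto simp: Un_absorb1)
  qed
qed

lemma permutes_conjugate_if_orbit_cards_eq:
  assumes "\<sigma> permutes S" "\<tau> permutes S" "finite S"
    and "image_mset card (mset_set (perm_orbits \<sigma> S)) = image_mset card (mset_set (perm_orbits \<tau> S))"
  shows "\<exists>h. h permutes S \<and> \<sigma> = h \<circ> \<tau> \<circ> inv h"
proof -
  obtain h\<^sub>0 where h\<^sub>0: "bij_betw h\<^sub>0 S S" "\<forall>z\<in>S. h\<^sub>0 (\<tau> z) = \<sigma> (h\<^sub>0 z)"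
    using conjugator_exists_if_orbit_cards_eq[of \<sigma> \<tau> S S] assms
    by (auto simp: permutation_permutes permutes_image)
  define h where "h x = (if x \<in> S then h\<^sub>0 x else x)" for x
  have "bij_betw h S S"
    using h\<^sub>0(1) by (rule bij_betw_cong[THEN iffD1, rotated]) (simp add: h_def)
  then have h: "h permutes S" by (rule bij_imp_permutes) (simp add: h_def)
  have "\<sigma> \<circ> h = h \<circ> \<tau>"
  proof
    fix x
    show "(\<sigma> \<circ> h) x = (h \<circ> \<tau>) x"
    proof (cases "x \<in> S")
      case True
      then show ?thesis
        using h\<^sub>0 assms(2) by (simp add: h_def bij_betw_apply permutes_in_image)
    next
      case False
      then show ?thesis using assms(1,2) by (simp add: h_def permutes_not_in)
    qed
  qed
  then have "\<sigma> = h \<circ> \<tau> \<circ> inv h"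
    by (metis comp_assoc comp_id permutes_inv_o(1)[OF h])
  with h show ?thesis by blast
qed

lemma cycle_of_list3_eq:
  assumes "distinct [a, b, c]"
  shows "cycle_of_list [a, b, c] = (\<lambda>x. if x = a then b else if x = b then c else if x = c then a else x)"
  using assms by (auto simp: fun_eq_iff transpose_def)

lemma ex_not_in_if_card_less: "finite B \<Longrightarrow> card B < card A \<Longrightarrow> \<exists>v\<in>A. v \<notin> B"
  using card_mono[of B A] by auto

locale permutation_group =
  fixes G :: "('a \<Rightarrow> 'a) \<Rightarrow> bool"
  assumes id_mem: "G id"
    and bij_if_mem: "G g \<Longrightarrow> bij g"
    and comp_closed: "G f \<Longrightarrow> G g \<Longrightarrow> G (f \<circ> g)"
    and inv_closed: "G g \<Longrightarrow> G (inv g)"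
begin

definition contains_three_cycles_on :: "'a set \<Rightarrow> bool" where
  "contains_three_cycles_on Y \<longleftrightarrow>
    (\<forall>a\<in>Y. \<forall>b\<in>Y. \<forall>c\<in>Y. distinct [a, b, c] \<longrightarrow> G (cycle_of_list [a, b, c]))"

lemma contains_three_cycles_onD:
  "contains_three_cycles_on Y \<Longrightarrow> a \<in> Y \<Longrightarrow> b \<in> Y \<Longrightarrow> c \<in> Y \<Longrightarrow> distinct [a, b, c]
    \<Longrightarrow> G (cycle_of_list [a, b, c])"
  unfolding contains_three_cycles_on_def by blast

lemma three_cycle_conj:
  assumes "G g" "G (cycle_of_list [a, b, c])" "distinct [a, b, c]"
    and "g a = a'" "g b = b'" "g c = c'"
  shows "G (cycle_of_list [a', b', c'])"
  using comp_closed[OF comp_closed[OF assms(1,2)] inv_closed[OF assms(1)]]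
    conjugation_of_cycle[OF assms(3) bij_if_mem[OF assms(1)]] assms(4-6)
  by (simp del: cycle_of_list.simps)

lemma three_cycle_rotate:
  assumes "G (cycle_of_list [a, b, c])" "distinct [a, b, c]"
  shows "G (cycle_of_list [b, c, a])"
  using assms cycle_of_list_rotate_independent[of "[a, b, c]" 1] by (simp del: cycle_of_list.simps)

lemma three_cycle_swap:
  assumes "G (cycle_of_list [a, b, c])" "distinct [a, b, c]"
  shows "G (cycle_of_list [b, a, c])"
proof -
  have "inv (cycle_of_list [a, b, c]) = cycle_of_list [b, a, c]"
    by (rule inv_unique_comp) (use assms(2) in \<open>auto simp: fun_eq_iff transpose_def\<close>)
  then show ?thesis using inv_closed[OF assms(1)] by simp
qed

lemma three_cycle_replace_first:
  assumes Y: "contains_three_cycles_on Y" "finite Y" "4 \<le> card Y"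
    and pqr: "p \<in> Y" "q \<in> Y" "r \<in> Y" "p \<noteq> q" "r \<noteq> q" and z: "z \<notin> Y"
    and pqz: "G (cycle_of_list [p, q, z])"
  shows "G (cycle_of_list [r, q, z])"
proof (cases "r = p")
  case False
  have "card {p, q, r} < card Y" using Y(3) by (auto simp: card_insert_if)
  then obtain v where v: "v \<in> Y" "v \<notin> {p, q, r}"
    using ex_not_in_if_card_less[of "{p, q, r}" Y] by auto
  then have "G (cycle_of_list [p, r, v])"
    using pqr False by (intro contains_three_cycles_onD[OF Y(1)]) auto
  from this pqz show ?thesis
    by (rule three_cycle_conj) (use pqr v z False in \<open>auto simp: transpose_def\<close>)
qed (use pqz in simp)

lemma contains_three_cycles_on_insert:
  assumes Y: "contains_three_cycles_on Y" "finite Y" "4 \<le> card Y"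
    and ab: "a \<in> Y" "b \<in> Y" "a \<noteq> b" and z: "z \<notin> Y"
    and abz: "G (cycle_of_list [a, b, z])"
  shows "contains_three_cycles_on (insert z Y)"
proof -
  note replace = three_cycle_replace_first[OF Y _ _ _ _ _ z]
  have swap: "G (cycle_of_list [q, p, z])"
    if "G (cycle_of_list [p, q, z])" "p \<in> Y" "q \<in> Y" "p \<noteq> q" for p q
    using three_cycle_swap that z by auto
  have through_z: "G (cycle_of_list [x, y, z])" if xy: "x \<in> Y" "y \<in> Y" "x \<noteq> y" for x y
  proof -
    obtain p where p: "p \<in> Y" "p \<noteq> x" "G (cycle_of_list [p, x, z])"
    proof (cases "x = b")
      case True
      then show ?thesis using that[of a] ab abz by simp
    next
      case False
      have "G (cycle_of_list [x, b, z])" by (rule replace[OF ab(1,2) xy(1) ab(3) False abz])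
      from swap[OF this xy(1) ab(2) False] show ?thesis using that[of b] ab(2) False by simp
    qed
    have "G (cycle_of_list [y, x, z])"
      by (rule replace[OF p(1) xy(1,2) p(2) xy(3)[symmetric] p(3)])
    from swap[OF this xy(2,1) xy(3)[symmetric]] show ?thesis .
  qed
  show ?thesis unfolding contains_three_cycles_on_def
  proof (intro ballI impI)
    fix a' b' c' assume abc: "a' \<in> insert z Y" "b' \<in> insert z Y" "c' \<in> insert z Y" "distinct [a', b', c']"
    then consider "a' \<in> Y" "b' \<in> Y" "c' \<in> Y" | "c' = z" | "a' = z" | "b' = z" by auto
    then show "G (cycle_of_list [a', b', c'])"
    proof cases
      case 1
      then show ?thesis using Y(1) abc(4) unfolding contains_three_cycles_on_def by blast
    next
      case 2
      then show ?thesis using through_z abc by auto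
    next
      case 3
      then show ?thesis
        using three_cycle_rotate[OF three_cycle_rotate[OF through_z[of b' c']]] abc by auto
    next
      case 4
      then show ?thesis using three_cycle_rotate[OF through_z[of c' a']] abc by auto
    qed
  qed
qed

lemma contains_three_cycles_on_four:
  assumes p: "distinct [p\<^sub>1, p\<^sub>2, p\<^sub>3, p\<^sub>4]"
    and c\<^sub>1: "G (cycle_of_list [p\<^sub>1, p\<^sub>2, p\<^sub>3])"
    and c\<^sub>2: "G (cycle_of_list [p\<^sub>2, p\<^sub>3, p\<^sub>4])"
  shows "contains_three_cycles_on {p\<^sub>1, p\<^sub>2, p\<^sub>3, p\<^sub>4}"
proof -
  (* conjugates of the second cycle by the first and its inverse; with their inverses and
     rotations these give all eight 3-cycles on four points *)
  have c\<^sub>3: "G (cycle_of_list [p\<^sub>3, p\<^sub>1, p\<^sub>4])"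
    by (rule three_cycle_conj[OF c\<^sub>1 c\<^sub>2]) (use p in \<open>auto simp: transpose_def\<close>)
  have "G (cycle_of_list [p\<^sub>2, p\<^sub>1, p\<^sub>3])" using three_cycle_swap[OF c\<^sub>1] p by simp
  then have c\<^sub>4: "G (cycle_of_list [p\<^sub>1, p\<^sub>2, p\<^sub>4])"
    by (rule three_cycle_conj[OF _ c\<^sub>2]) (use p in \<open>auto simp: transpose_def\<close>)
  note oriented = c\<^sub>1 c\<^sub>2 c\<^sub>3 c\<^sub>4
  note both = oriented oriented[THEN three_cycle_swap]
  note all = both both[THEN three_cycle_rotate] both[THEN three_cycle_rotate, THEN three_cycle_rotate]
  show ?thesis unfolding contains_three_cycles_on_def using all p by (auto simp del: cycle_of_list.simps)
qed

end

lemma permutation_group_contains_alt_group: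
  fixes G :: "(nat \<Rightarrow> nat) \<Rightarrow> bool"
  assumes "permutation_group G" "permutation_group.contains_three_cycles_on G {1..m}"
    and "p \<in> carrier (alt_group m)"
  shows "G p"
proof -
  interpret permutation_group G by fact
  have three_cycles: "G h" if h: "h \<in> three_cycles m" for h
  proof -
    obtain cs where cs: "h = cycle_of_list cs" "distinct cs" "length cs = 3" "set cs \<subseteq> {1..m}"
      using h by blast
    then obtain a b c where "cs = [a, b, c]" using stupid_lemma by blast
    then show ?thesis using cs contains_three_cycles_onD[OF assms(2)] by auto
  qed
  have "p \<in> generate (alt_group m) (three_cycles m)"
    using assms(3) alt_group_carrier_as_three_cycles by blast
  then show "G p"
  proof (induction rule: generate.induct)
    case one
    show ?case by (simp only: alt_group_one id_mem)
  next
    case (incl h)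
    then show ?case by (rule three_cycles)
  next
    case (inv h)
    then have "m_inv (alt_group m) h = inv h"
      using alt_group_inv_equality three_cycles_incl by blast
    then show ?case using inv_closed[OF three_cycles[OF inv]] by simp
  next
    case (eng h\<^sub>1 h\<^sub>2)
    show ?case unfolding alt_group_mult by (rule comp_closed[OF eng.IH])
  qed
qed

lemma crossing_crossing [simp]: "crossing n j (crossing n j i) = i"
  unfolding crossing_def by auto

lemma inv_crossing: "inv (crossing n j) = crossing n j"
  by (rule inv_unique_comp) (simp_all add: fun_eq_iff)

lemma bij_crossing: "bij (crossing n j)"
  by (rule o_bij[of "crossing n j"]) (simp_all add: fun_eq_iff)

lemma crossing_product_crossing:
  "1 \<le> j \<Longrightarrow> j + n - 1 \<le> m \<Longrightarrow> crossing_product n m (crossing n j)"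
  using crossing_product.cp_step[OF _ _ crossing_product.cp_id] by simp

lemma crossing_product_comp:
  assumes "crossing_product n m f" "crossing_product n m g"
  shows "crossing_product n m (f \<circ> g)"
  using assms(1)
proof (induction rule: crossing_product.induct)
  case cp_id
  then show ?case using assms(2) by simp
next
  case (cp_step j f)
  have "crossing_product n m (crossing n j \<circ> (f \<circ> g))"
    by (rule crossing_product.cp_step[OF cp_step(1,2,4)])
  then show ?case by (simp only: comp_assoc)
qed

lemma crossing_product_bij: "crossing_product n m g \<Longrightarrow> bij g"
proof (induction rule: crossing_product.induct)
  case cp_id
  show ?case by (rule bij_id)
next
  case (cp_step j g)
  show ?case by (rule bij_comp[OF cp_step(4) bij_crossing])
qed

lemma crossing_product_inv:
  assumes "crossing_product n m g"
  shows "crossing_product n m (inv g)"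
  using assms
proof (induction rule: crossing_product.induct)
  case cp_id
  show ?case by (simp only: inv_id crossing_product.cp_id)
next
  case (cp_step j g)
  have "inv (crossing n j \<circ> g) = inv g \<circ> crossing n j"
    using o_inv_distrib[OF bij_crossing crossing_product_bij[OF cp_step(3)]] by (simp add: inv_crossing)
  then show ?case
    using crossing_product_comp[OF cp_step(4) crossing_product_crossing[OF cp_step(1,2)]] by (simp only:)
qed

interpretation crossing: permutation_group "crossing_product n m" for n m
  by unfold_locales
    (auto intro: crossing_product.cp_id crossing_product_comp crossing_product_inv crossing_product_bij)

lemma crossing_product_three_cycle:
  assumes "2 \<le> n" "1 \<le> j" "j + n + 1 \<le> m"
  shows "crossing_product n m (cycle_of_list [j, j + n - 1, j + n + 1])"
proof -
  (* pi_(j+1) pi_(j+2) pi_(j+1) agrees with pi_j, except that it fixes j and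
     swaps j + n - 1 with j + n + 1. *)
  obtain k where k: "n = k + 2" using assms(1) by (metis le_add_diff_inverse2)
  have "crossing n j \<circ> crossing n (j + 1) \<circ> crossing n (j + 2) \<circ> crossing n (j + 1)
      = (\<lambda>x. if x = j then j + n - 1 else if x = j + n - 1 then j + n + 1 else if x = j + n + 1 then j else x)"
    unfolding k by (auto simp: fun_eq_iff crossing_def)
  also have "\<dots> = cycle_of_list [j, j + n - 1, j + n + 1]"
    using assms(1) by (intro cycle_of_list3_eq[symmetric]) auto
  finally have product_eq: "crossing n j \<circ> crossing n (j + 1) \<circ> crossing n (j + 2) \<circ> crossing n (j + 1)
      = cycle_of_list [j, j + n - 1, j + n + 1]" .
  have "crossing_product n m
      (crossing n j \<circ> crossing n (j + 1) \<circ> crossing n (j + 2) \<circ> crossing n (j + 1))"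
    using assms by (intro crossing_product_comp crossing_product_crossing) auto
  then show ?thesis unfolding product_eq .
qed

lemma crossing_product_three_cycle_step_two:
  assumes "2 \<le> n" "2 * n \<le> m" "1 \<le> b" "b + 4 \<le> m"
  shows "crossing_product n m (cycle_of_list [b, b + 2, b + 4])"
proof (cases "b + n + 2 \<le> m")
  case True
  have "crossing_product n m (crossing n (b + 3) \<circ> crossing n (b + 1))"
    using assms True by (intro crossing_product_comp crossing_product_crossing) auto
  moreover have "crossing_product n m (cycle_of_list [b, b + n - 1, b + n + 1])"
    using crossing_product_three_cycle[of n b m] assms True by (simp del: cycle_of_list.simps)
  ultimately show ?thesis
    by (rule crossing.three_cycle_conj) (use assms True in \<open>auto simp: crossing_def\<close>)
next
  case False
  have "crossing_product n m (cycle_of_list [b + 3 - n, b + 3 - n + n - 1, b + 3 - n + n + 1])"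
    using assms False by (intro crossing_product_three_cycle) auto
  moreover have "b + 3 - n + n - 1 = b + 2" "b + 3 - n + n + 1 = b + 4" using assms False by auto
  ultimately have cycle: "crossing_product n m (cycle_of_list [b + 3 - n, b + 2, b + 4])"
    by (simp only:)
  have "crossing_product n m (crossing n (b + 2 - n))"
    using assms False by (intro crossing_product_crossing) auto
  from this cycle show ?thesis
    by (rule crossing.three_cycle_conj) (use assms False in \<open>auto simp: crossing_def\<close>)
qed

lemma contains_three_cycles_on_odd:
  assumes "2 \<le> n" "2 * n \<le> m" "7 \<le> k" "k \<le> m"
  shows "crossing.contains_three_cycles_on n m {i \<in> {1..k}. odd i}"
  using assms(3,4)
proof (induction k rule: nat_induct_at_least)
  case base
  have odd_points: "{i \<in> {1..7}. odd i} = {1, 3, 5, 7 :: nat}"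
    by (rule Set.set_eqI, simp, presburger)
  have "crossing_product n m (cycle_of_list [1, 3, 5])"
    using crossing_product_three_cycle_step_two[of n m 1] assms(1,2) base
    by (simp del: cycle_of_list.simps add: eval_nat_numeral)
  moreover have "crossing_product n m (cycle_of_list [3, 5, 7])"
    using crossing_product_three_cycle_step_two[of n m 3] assms(1,2) base
    by (simp del: cycle_of_list.simps add: eval_nat_numeral)
  ultimately show ?case
    unfolding odd_points by (intro crossing.contains_three_cycles_on_four) simp_all
next
  case (Suc k)
  show ?case
  proof (cases "odd (Suc k)")
    case False
    then have "{i \<in> {1..Suc k}. odd i} = {i \<in> {1..k}. odd i}" by (auto simp: le_Suc_eq)
    then show ?thesis using Suc by simp
  next
    case True
    let ?Y = "{i \<in> {1..k}. odd i}"
    have "{1, 3, 5, 7} \<subseteq> ?Y" using Suc.hyps by auto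
    then have card: "4 \<le> card ?Y" using card_mono[of ?Y "{1, 3, 5, 7}"] by simp
    have k: "8 \<le> k" "odd (k - 3)" "odd (k - 1)" using True Suc.hyps by presburger+
    have "crossing_product n m (cycle_of_list [k - 3, k - 3 + 2, k - 3 + 4])"
      using assms(1,2) Suc.prems k(1) by (intro crossing_product_three_cycle_step_two) auto
    moreover have "k - 3 + 2 = k - 1" "k - 3 + 4 = Suc k" using k(1) by auto
    ultimately have "crossing_product n m (cycle_of_list [k - 3, k - 1, Suc k])" by (simp only:)
    then have "crossing.contains_three_cycles_on n m (insert (Suc k) ?Y)"
      using Suc.IH Suc.prems k
      by (intro crossing.contains_three_cycles_on_insert[OF _ _ card]) auto
    moreover have "{i \<in> {1..Suc k}. odd i} = insert (Suc k) ?Y" using True by (auto simp: le_Suc_eq)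
    ultimately show ?thesis by simp
  qed
qed

lemma crossing_three_cycle_through_even_point:
  assumes "2 \<le> n" "even n" "2 * n + 2 \<le> m" "even z" "1 \<le> z" "z \<le> m"
  defines "Y \<equiv> {i \<in> {1..m}. odd i} \<union> {i \<in> {1..z - 1}. even i}"
  shows "\<exists>a\<in>Y. \<exists>b\<in>Y. a \<noteq> b \<and> crossing_product n m (cycle_of_list [a, b, z])"
proof (cases "z \<le> n")
  case True
  have "crossing_product n m (cycle_of_list [z, z + n - 1, z + n + 1])"
    using True assms by (intro crossing_product_three_cycle) auto
  then have cycle: "crossing_product n m (cycle_of_list [z + n - 1, z + n + 1, z])"
    by (rule crossing.three_cycle_rotate) (use assms(1) in auto)
  have "odd (z + n - 1)" "odd (z + n + 1)" using assms(2,4,5) by presburger+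
  then have "z + n - 1 \<in> Y" "z + n + 1 \<in> Y" using True assms(1,3) by (auto simp: Y_def)
  moreover have "z + n - 1 \<noteq> z + n + 1" using assms(1) by simp
  ultimately show ?thesis using cycle by blast
next
  case False
  then have large: "n + 2 \<le> z" using assms(2,4) by presburger
  have "crossing_product n m (cycle_of_list [z - n - 1, z - n - 1 + n - 1, z - n - 1 + n + 1])"
    using large assms by (intro crossing_product_three_cycle) auto
  moreover have "z - n - 1 + n - 1 = z - 2" "z - n - 1 + n + 1 = z" using large by auto
  ultimately have cycle: "crossing_product n m (cycle_of_list [z - n - 1, z - 2, z])" by (simp only:)
  have "odd (z - n - 1)" "even (z - 2)" using large assms(2,4) by presburger+
  then have "z - n - 1 \<in> Y" "z - 2 \<in> Y" "z - n - 1 \<noteq> z - 2"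
    using large assms(1,6) by (auto simp: Y_def)
  then show ?thesis using cycle by blast
qed

lemma contains_three_cycles_on_atLeastAtMost:
  assumes "4 \<le> n" "even n" "2 * n + 2 \<le> m"
  shows "crossing.contains_three_cycles_on n m {1..m}"
proof -
  have "crossing.contains_three_cycles_on n m ({i \<in> {1..m}. odd i} \<union> {i \<in> {1..k}. even i})"
    if "k \<le> m" for k
    using that
  proof (induction k)
    case 0
    then show ?case using contains_three_cycles_on_odd[of n m m] assms by simp
  next
    case (Suc k)
    let ?Y = "{i \<in> {1..m}. odd i} \<union> {i \<in> {1..k}. even i}"
    have IH: "crossing.contains_three_cycles_on n m ?Y" using Suc by simp
    show ?case
    proof (cases "even (Suc k)")
      case False
      then have "{i \<in> {1..m}. odd i} \<union> {i \<in> {1..Suc k}. even i} = ?Y" by (auto simp: le_Suc_eq)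
      then show ?thesis using IH by simp
    next
      case True
      have "{1, 3, 5, 7} \<subseteq> ?Y" using assms by auto
      then have card: "4 \<le> card ?Y" using card_mono[of ?Y "{1, 3, 5, 7}"] by simp
      have z: "Suc k \<notin> ?Y" using True by auto
      obtain a b where ab: "a \<in> ?Y" "b \<in> ?Y" "a \<noteq> b"
          "crossing_product n m (cycle_of_list [a, b, Suc k])"
        using crossing_three_cycle_through_even_point[of n m "Suc k"] assms True Suc.prems by auto
      have "crossing.contains_three_cycles_on n m (insert (Suc k) ?Y)"
        by (rule crossing.contains_three_cycles_on_insert[OF IH _ card ab(1-3) z ab(4)]) simp
      moreover have "{i \<in> {1..m}. odd i} \<union> {i \<in> {1..Suc k}. even i} = insert (Suc k) ?Y"
        using True Suc.prems by (auto simp: le_Suc_eq)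
      ultimately show ?thesis by simp
    qed
  qed
  moreover have "{i \<in> {1..m}. odd i} \<union> {i \<in> {1..m}. even i} = {1..m}" by auto
  ultimately show ?thesis by (metis order.refl)
qed

lemma crossing_two: "crossing 2 j = transpose j (j + 1)"
  by (auto simp: fun_eq_iff crossing_def transpose_def)

lemma crossing_product_two_transpose:
  assumes "1 \<le> a" "a < b" "b \<le> m"
  shows "crossing_product 2 m (transpose a b)"
  using assms
proof (induction b)
  case (Suc b)
  show ?case
  proof (cases "a = b")
    case True
    then show ?thesis using crossing_product_crossing[of a 2 m] Suc.prems by (simp add: crossing_two)
  next
    case False
    then have "transpose a (Suc b) = transpose b (Suc b) \<circ> transpose a b \<circ> transpose b (Suc b)"
      using Suc.prems by (auto simp: fun_eq_iff transpose_def)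
    moreover have "crossing_product 2 m (transpose b (Suc b))"
      using crossing_product_crossing[of b 2 m] Suc.prems False by (simp add: crossing_two)
    ultimately show ?thesis
      using Suc False by (metis crossing_product_comp less_Suc_eq Suc_leD)
  qed
qed simp

lemma crossing_product_two_if_permutes:
  assumes "g permutes {1..m}"
  shows "crossing_product 2 m g"
  using assms finite_atLeastAtMost
proof (induction rule: permutes_induct)
  case id
  show ?case by (rule crossing_product.cp_id)
next
  case (swap a b g)
  have "crossing_product 2 m (transpose a b)"
  proof (cases "a < b")
    case True
    then show ?thesis using swap(1,2) by (intro crossing_product_two_transpose) auto
  next
    case False
    then show ?thesis
      using swap(1-3) crossing_product_two_transpose[of b a m] by (simp add: transpose_commute)
  qed
  then show ?case by (rule crossing_product_comp[OF _ swap.IH])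
qed

lemma crossing_product_if_evenperm:
  assumes "2 \<le> n" "even n" "3 * n - 2 \<le> m" "g permutes {1..m}" "evenperm g"
  shows "crossing_product n m g"
proof (cases "n = 2")
  case True
  then show ?thesis using crossing_product_two_if_permutes[OF assms(4)] by simp
next
  case False
  then have "4 \<le> n" using assms(1,2) by presburger
  moreover have "g \<in> carrier (alt_group m)" using assms(4,5) by (simp add: alt_group_carrier)
  ultimately show ?thesis
    using permutation_group_contains_alt_group[OF crossing.permutation_group_axioms
        contains_three_cycles_on_atLeastAtMost] assms(2,3)
    by simp
qed

lemma ex_two_fixed_points:
  assumes "\<tau> permutes S" "finite S" "perm_size \<tau> + 2 \<le> card S"
  shows "\<exists>a\<in>S. \<exists>b\<in>S. a \<noteq> b \<and> \<tau> a = a \<and> \<tau> b = b"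
proof -
  define F where "F = S - {i. \<tau> i \<noteq> i}"
  have "{i. \<tau> i \<noteq> i} \<subseteq> S" using assms(1) by (auto simp: permutes_def)
  then have "2 \<le> card F"
    using assms(2,3) by (simp add: F_def card_Diff_subset finite_subset perm_size_def)
  then obtain a where "a \<in> F" using ex_not_in_if_card_less[of "{}" F] by auto
  moreover obtain b where "b \<in> F" "b \<noteq> a"
    using ex_not_in_if_card_less[of "{a}" F] \<open>2 \<le> card F\<close> by auto
  ultimately show ?thesis by (auto simp: F_def)
qed

lemma even_conjugator_exists:
  assumes h: "h permutes S" and "finite S" "bij \<tau>"
    and ab: "a \<in> S" "b \<in> S" "a \<noteq> b" "\<tau> a = a" "\<tau> b = b"
  shows "\<exists>g. g permutes S \<and> evenperm g \<and> g \<circ> \<tau> \<circ> inv g = h \<circ> \<tau> \<circ> inv h"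
proof (cases "evenperm h")
  case False
  define g where "g = h \<circ> transpose a b"
  have g: "g permutes S" unfolding g_def using permutes_compose[OF permutes_swap_id[OF ab(1,2)] h] .
  have "permutation h" using h assms(2) by (auto simp: permutation_permutes)
  then have "evenperm g"
    using False ab(3) by (simp add: g_def evenperm_comp permutation_swap_id evenperm_swap)
  have commute: "transpose a b \<circ> \<tau> = \<tau> \<circ> transpose a b"
    using ab bij_is_inj[OF assms(3)] by (auto simp: fun_eq_iff transpose_def inj_eq)
  have "inv g = transpose a b \<circ> inv h"
    using o_inv_distrib[OF permutes_bij[OF h] bij_transpose] by (simp add: g_def)
  then have "g \<circ> \<tau> \<circ> inv g = h \<circ> (transpose a b \<circ> \<tau>) \<circ> transpose a b \<circ> inv h"
    by (simp only: g_def comp_assoc)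
  also have "\<dots> = h \<circ> \<tau> \<circ> (transpose a b \<circ> transpose a b) \<circ> inv h"
    by (simp only: commute comp_assoc)
  also have "\<dots> = h \<circ> \<tau> \<circ> inv h" by simp
  finally have "g \<circ> \<tau> \<circ> inv g = h \<circ> \<tau> \<circ> inv h" .
  with g \<open>evenperm g\<close> show ?thesis by (intro exI[of _ g]) simp
qed (use h in blast)

theorem lemma2p6:
  fixes n N :: nat and \<tau> \<sigma> :: "nat \<Rightarrow> nat"
  assumes "n \<ge> 2" and "even n" and "N \<ge> 1"
    and "\<tau> permutes {1..N + 3 * n - 3}"
    and "perm_size \<tau> \<le> N"
    and "\<sigma> permutes {1..N + 3 * n - 3}"
    and "cycle_type (N + 3 * n - 3) \<sigma> = cycle_type (N + 3 * n - 3) \<tau>"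
  shows "\<exists>g. crossing_product n (N + 3 * n - 3) g \<and> \<sigma> = g \<circ> \<tau> \<circ> inv g"
proof -
  define m where "m = N + 3 * n - 3"
  note assms = assms[folded m_def]
  obtain h where h: "h permutes {1..m}" "\<sigma> = h \<circ> \<tau> \<circ> inv h"
    using permutes_conjugate_if_orbit_cards_eq[OF assms(6,4)] assms(4,6,7)
    by (auto simp: cycle_type_conv_perm_orbits)
  have "perm_size \<tau> + 2 \<le> card {1..m}" using assms(1,5) by (simp add: m_def)
  then obtain a b where ab: "a \<in> {1..m}" "b \<in> {1..m}" "a \<noteq> b" "\<tau> a = a" "\<tau> b = b"
    using ex_two_fixed_points[OF assms(4) finite_atLeastAtMost] by blast
  obtain g where g: "g permutes {1..m}" "evenperm g" "g \<circ> \<tau> \<circ> inv g = h \<circ> \<tau> \<circ> inv h"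
    using even_conjugator_exists[OF h(1) finite_atLeastAtMost permutes_bij[OF assms(4)] ab] by blast
  have "crossing_product n m g"
    using crossing_product_if_evenperm[OF assms(1,2) _ g(1,2)] assms(3) by (simp add: m_def)
  with g(3) h(2) show ?thesis unfolding m_def by metis
qed

end
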